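(* Let $R$ be an associative ring with identity. Suppose that at least one of the following two conditions holds: (1) for every $c \in R$ and every $x \in R$ such that $yx - 1 \in Rc$ for some $y \in R$, there exists a left unit $u \in R$ with $x - u \in Rc$; (2) for every $c \in R$ and every $x \in R$ such that $xy - 1 \in cR$ for some $y \in R$, there exists a right unit $u \in R$ with $x - u \in cR$. Then $R$ is directly finite, i.e. for all $a,b \in R$, $ab = 1$ implies $ba = 1$.
   Context: An element $u \in R$ is a left unit if there exists $v \in R$ with $vu = 1$, and a right unit if there exists $v \in R$ with $uv = 1$. Condition (1) is what the paper calls "every left unit lifts modulo every left principal ideal", and condition (2) is what it calls "every right unit lifts modulo every right principal ideal". *)

theory Defs
  imports Main
begin

definition left_unit :: "'a::ring_1 \<Rightarrow> bool" where
  "left_unit u \<longleftrightarrow> (\<exists>v. v * u = 1)"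

definition right_unit :: "'a::ring_1 \<Rightarrow> bool" where
  "right_unit u \<longleftrightarrow> (\<exists>v. u * v = 1)"

end

theory Submission
  imports Defs
begin

text \<open>If a b = 1 then e = 1 - b a satisfies a e = 0 = e b, and b a - 1 lies both in R e and
  in e R. Lifting a modulo R e to a left unit u = a - r e keeps u b = 1, so u is two-sided
  invertible with inverse b, which forces u = a and b a = 1. The right-handed condition is
  treated symmetrically by lifting b modulo e R.\<close>

lemma left_inverse_eq_right_inverse:
  fixes u v w :: "'a::monoid_mult"
  assumes "v * u = 1" and "u * w = 1"
  shows "v = w"
  by (metis assms mult.assoc mult_1_left mult_1_right)

lemma mult_one_minus_swap_right_zero:
  fixes a b :: "'a::ring_1"
  assumes "a * b = 1"
  shows "a * (1 - b * a) = 0"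
  using assms by (simp add: right_diff_distrib mult.assoc[symmetric])

lemma one_minus_swap_mult_left_zero:
  fixes a b :: "'a::ring_1"
  assumes "a * b = 1"
  shows "(1 - b * a) * b = 0"
  using assms by (simp add: left_diff_distrib mult.assoc)

lemma directly_finite_if_left_units_lift:
  fixes a b :: "'a::ring_1"
  assumes lift: "\<forall>(c::'a) x. (\<exists>y. \<exists>r. y * x - 1 = r * c) \<longrightarrow>
                   (\<exists>u. left_unit u \<and> (\<exists>r. x - u = r * c))"
    and ab: "a * b = 1"
  shows "b * a = 1"
proof -
  define e where "e = 1 - b * a"
  have "b * a - 1 = (-1) * e" by (simp add: e_def)
  with lift obtain u r where "left_unit u" and lifted: "a - u = r * e" by blast
  then obtain v where vu: "v * u = 1" by (auto simp: left_unit_def)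
  have "u = a - r * e" using lifted by (simp add: algebra_simps)
  then have ub: "u * b = 1"
    using ab one_minus_swap_mult_left_zero[OF ab]
    by (simp add: e_def left_diff_distrib mult.assoc)
  have bu: "b * u = 1" using left_inverse_eq_right_inverse[OF vu ub] vu by simp
  have "u = (a * b) * u" using ab by simp
  also have "\<dots> = a" using bu by (simp add: mult.assoc)
  finally show ?thesis using bu by simp
qed

lemma directly_finite_if_right_units_lift:
  fixes a b :: "'a::ring_1"
  assumes lift: "\<forall>(c::'a) x. (\<exists>y. \<exists>r. x * y - 1 = c * r) \<longrightarrow>
                   (\<exists>u. right_unit u \<and> (\<exists>r. x - u = c * r))"
    and ab: "a * b = 1"
  shows "b * a = 1"
proof -
  define e where "e = 1 - b * a"
  have "b * a - 1 = e * (-1)" by (simp add: e_def)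
  with lift obtain u r where "right_unit u" and lifted: "b - u = e * r" by blast
  then obtain w where uw: "u * w = 1" by (auto simp: right_unit_def)
  have "u = b - e * r" using lifted by (simp add: algebra_simps)
  then have au: "a * u = 1"
    using ab mult_one_minus_swap_right_zero[OF ab]
    by (simp add: e_def right_diff_distrib mult.assoc[symmetric])
  have ua: "u * a = 1" using left_inverse_eq_right_inverse[OF au uw] uw by simp
  have "u = u * (a * b)" using ab by simp
  also have "\<dots> = b" using ua by (simp add: mult.assoc[symmetric])
  finally show ?thesis using ua by simp
qed

theorem lemma2:
  assumes "(\<forall>(c::'a::ring_1) x. (\<exists>y. \<exists>r. y * x - 1 = r * c) \<longrightarrow>
              (\<exists>u. left_unit u \<and> (\<exists>r. x - u = r * c)))
         \<or> (\<forall>(c::'a::ring_1) x. (\<exists>y. \<exists>r. x * y - 1 = c * r) \<longrightarrow>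
              (\<exists>u. right_unit u \<and> (\<exists>r. x - u = c * r)))"
  shows "\<forall>a b :: 'a. a * b = 1 \<longrightarrow> b * a = 1"
  using assms directly_finite_if_left_units_lift directly_finite_if_right_units_lift
  by blast

end
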